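(* Let $G$ be a simplicial group and $M$ an abelian $\pi_0(G)$-module. The map $C^1(\pi_0(G),M)\to C^1(G,M)$, $c\mapsto (g_0\mapsto c(g_0B_0NG))$, restricts to an isomorphism $Z^1(\pi_0(G),M)\to Z^1(G,M)$, which in turn restricts to an isomorphism $B^1(\pi_0(G),M)\to B^1(G,M)$. In particular $H^1(G,M)\cong H^1(\pi_0(G),M)$.
   Context: Simplicial group $G$ (faces $d_k$), $N_1G=\ker d_1\subseteq G_1$, $B_0NG=d_0(N_1G)$, $\pi_0(G)=G_0/B_0NG$. Cochain complex of $G$: $C^n(G,M)=\mathrm{Map}(G_{n-1}\times\cdots\times G_0,M)$; in low degrees $C^0=M$, $C^1=\mathrm{Map}(G_0,M)$, $C^2=\mathrm{Map}(G_1\times G_0,M)$, $(dc)(g_0)=c-\langle g_0\rangle\cdot c$ for $c\in C^0$, and $(dc)(g_1,g_0)=c(d_0g_1)-c((d_1g_1)g_0)+\langle g_1\rangle\cdot c(g_0)$ for $c\in C^1$, where $\langle g\rangle$ is the class in $\pi_0(G)$ of $g$ (resp. of $d_1g$). For a group $\Pi$: $C^1(\Pi,M)=\mathrm{Map}(\Pi,M)$, $(dc)(h,g)=c(h)-c(hg)+h\cdot c(g)$, $(dc)(g)=c-g\cdot c$ on $C^0=M$; $Z^1,B^1,H^1$ as usual. *)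

theory Defs
  imports "HOL-Algebra.Algebra"
begin

text \<open>G n is the group of n-simplices; d n i : G (Suc n) -> G n is the i-th face map
  (i \<le> Suc n); s n j : G n -> G (Suc n) is the j-th degeneracy (j \<le> n).\<close>

definition simplicial_group ::
  "(nat \<Rightarrow> 'a monoid) \<Rightarrow> (nat \<Rightarrow> nat \<Rightarrow> 'a \<Rightarrow> 'a) \<Rightarrow> (nat \<Rightarrow> nat \<Rightarrow> 'a \<Rightarrow> 'a) \<Rightarrow> bool" where
  "simplicial_group G d s \<longleftrightarrow>
     (\<forall>n. group (G n)) \<and>
     (\<forall>n i. i \<le> Suc n \<longrightarrow> d n i \<in> hom (G (Suc n)) (G n)) \<and>
     (\<forall>n j. j \<le> n \<longrightarrow> s n j \<in> hom (G n) (G (Suc n))) \<and>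
     (\<forall>n i j x. i < j \<and> j \<le> Suc (Suc n) \<and> x \<in> carrier (G (Suc (Suc n))) \<longrightarrow>
        d n i (d (Suc n) j x) = d n (j - 1) (d (Suc n) i x)) \<and>
     (\<forall>n i j x. i < j \<and> j \<le> Suc n \<and> x \<in> carrier (G (Suc n)) \<longrightarrow>
        d (Suc n) i (s (Suc n) j x) = s n (j - 1) (d n i x)) \<and>
     (\<forall>n j x. j \<le> n \<and> x \<in> carrier (G n) \<longrightarrow>
        d n j (s n j x) = x \<and> d n (Suc j) (s n j x) = x) \<and>
     (\<forall>n i j x. Suc j < i \<and> i \<le> Suc (Suc n) \<and> j \<le> n \<and> x \<in> carrier (G (Suc n)) \<longrightarrow>
        d (Suc n) i (s (Suc n) j x) = s n j (d n (i - 1) x)) \<and>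
     (\<forall>n i j x. i \<le> j \<and> j \<le> n \<and> x \<in> carrier (G n) \<longrightarrow>
        s (Suc n) i (s n j x) = s (Suc n) (Suc j) (s n i x))"

definition N1 :: "(nat \<Rightarrow> 'a monoid) \<Rightarrow> (nat \<Rightarrow> nat \<Rightarrow> 'a \<Rightarrow> 'a) \<Rightarrow> 'a set" where
  "N1 G d = {x \<in> carrier (G 1). d 0 1 x = \<one>\<^bsub>G 0\<^esub>}"

definition B0N :: "(nat \<Rightarrow> 'a monoid) \<Rightarrow> (nat \<Rightarrow> nat \<Rightarrow> 'a \<Rightarrow> 'a) \<Rightarrow> 'a set" where
  "B0N G d = d 0 0 ` N1 G d"

definition pi0 :: "(nat \<Rightarrow> 'a monoid) \<Rightarrow> (nat \<Rightarrow> nat \<Rightarrow> 'a \<Rightarrow> 'a) \<Rightarrow> 'a set monoid" where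
  "pi0 G d = G 0 Mod B0N G d"

definition cls :: "(nat \<Rightarrow> 'a monoid) \<Rightarrow> (nat \<Rightarrow> nat \<Rightarrow> 'a \<Rightarrow> 'a) \<Rightarrow> 'a \<Rightarrow> 'a set" where
  "cls G d g = B0N G d #>\<^bsub>G 0\<^esub> g"

text \<open>An abelian P-module: abelian group M (written multiplicatively) with a left action of
  P by group endomorphisms.\<close>
definition is_module :: "'p monoid \<Rightarrow> 'm monoid \<Rightarrow> ('p \<Rightarrow> 'm \<Rightarrow> 'm) \<Rightarrow> bool" where
  "is_module P M act \<longleftrightarrow> comm_group M \<and>
     (\<forall>x\<in>carrier P. act x \<in> hom M M) \<and>
     (\<forall>m\<in>carrier M. act \<one>\<^bsub>P\<^esub> m = m) \<and>
     (\<forall>x\<in>carrier P. \<forall>y\<in>carrier P. \<forall>m\<in>carrier M. act (x \<otimes>\<^bsub>P\<^esub> y) m = act x (act y m))"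

definition cochain_grp :: "'x set \<Rightarrow> 'm monoid \<Rightarrow> ('x \<Rightarrow> 'm) monoid" where
  "cochain_grp A M = \<lparr> carrier = A \<rightarrow>\<^sub>E carrier M,
      monoid.mult = (\<lambda>f g. \<lambda>x\<in>A. f x \<otimes>\<^bsub>M\<^esub> g x), monoid.one = (\<lambda>x\<in>A. \<one>\<^bsub>M\<^esub>) \<rparr>"

definition Z1_grp_set :: "'p monoid \<Rightarrow> 'm monoid \<Rightarrow> ('p \<Rightarrow> 'm \<Rightarrow> 'm) \<Rightarrow> ('p \<Rightarrow> 'm) set" where
  "Z1_grp_set P M act = {c \<in> carrier P \<rightarrow>\<^sub>E carrier M.
     \<forall>h\<in>carrier P. \<forall>g\<in>carrier P.
       c h \<otimes>\<^bsub>M\<^esub> inv\<^bsub>M\<^esub> (c (h \<otimes>\<^bsub>P\<^esub> g)) \<otimes>\<^bsub>M\<^esub> act h (c g) = \<one>\<^bsub>M\<^esub>}"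

definition B1_grp_set :: "'p monoid \<Rightarrow> 'm monoid \<Rightarrow> ('p \<Rightarrow> 'm \<Rightarrow> 'm) \<Rightarrow> ('p \<Rightarrow> 'm) set" where
  "B1_grp_set P M act = {c. \<exists>m\<in>carrier M. c = (\<lambda>g\<in>carrier P. m \<otimes>\<^bsub>M\<^esub> inv\<^bsub>M\<^esub> (act g m))}"

definition Z1_grp :: "'p monoid \<Rightarrow> 'm monoid \<Rightarrow> ('p \<Rightarrow> 'm \<Rightarrow> 'm) \<Rightarrow> ('p \<Rightarrow> 'm) monoid" where
  "Z1_grp P M act = (cochain_grp (carrier P) M)\<lparr>carrier := Z1_grp_set P M act\<rparr>"

definition B1_grp :: "'p monoid \<Rightarrow> 'm monoid \<Rightarrow> ('p \<Rightarrow> 'm \<Rightarrow> 'm) \<Rightarrow> ('p \<Rightarrow> 'm) monoid" where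
  "B1_grp P M act = (cochain_grp (carrier P) M)\<lparr>carrier := B1_grp_set P M act\<rparr>"

definition H1_grp :: "'p monoid \<Rightarrow> 'm monoid \<Rightarrow> ('p \<Rightarrow> 'm \<Rightarrow> 'm) \<Rightarrow> ('p \<Rightarrow> 'm) set monoid" where
  "H1_grp P M act = Z1_grp P M act Mod B1_grp_set P M act"

definition Z1_sg_set :: "(nat \<Rightarrow> 'a monoid) \<Rightarrow> (nat \<Rightarrow> nat \<Rightarrow> 'a \<Rightarrow> 'a) \<Rightarrow> 'm monoid
    \<Rightarrow> ('a set \<Rightarrow> 'm \<Rightarrow> 'm) \<Rightarrow> ('a \<Rightarrow> 'm) set" where
  "Z1_sg_set G d M act = {c \<in> carrier (G 0) \<rightarrow>\<^sub>E carrier M.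
     \<forall>g1\<in>carrier (G 1). \<forall>g0\<in>carrier (G 0).
       c (d 0 0 g1) \<otimes>\<^bsub>M\<^esub> inv\<^bsub>M\<^esub> (c (d 0 1 g1 \<otimes>\<^bsub>G 0\<^esub> g0))
         \<otimes>\<^bsub>M\<^esub> act (cls G d (d 0 1 g1)) (c g0) = \<one>\<^bsub>M\<^esub>}"

definition B1_sg_set :: "(nat \<Rightarrow> 'a monoid) \<Rightarrow> (nat \<Rightarrow> nat \<Rightarrow> 'a \<Rightarrow> 'a) \<Rightarrow> 'm monoid
    \<Rightarrow> ('a set \<Rightarrow> 'm \<Rightarrow> 'm) \<Rightarrow> ('a \<Rightarrow> 'm) set" where
  "B1_sg_set G d M act = {c. \<exists>m\<in>carrier M.
     c = (\<lambda>g0\<in>carrier (G 0). m \<otimes>\<^bsub>M\<^esub> inv\<^bsub>M\<^esub> (act (cls G d g0) m))}"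

definition Z1_sg :: "(nat \<Rightarrow> 'a monoid) \<Rightarrow> (nat \<Rightarrow> nat \<Rightarrow> 'a \<Rightarrow> 'a) \<Rightarrow> 'm monoid
    \<Rightarrow> ('a set \<Rightarrow> 'm \<Rightarrow> 'm) \<Rightarrow> ('a \<Rightarrow> 'm) monoid" where
  "Z1_sg G d M act = (cochain_grp (carrier (G 0)) M)\<lparr>carrier := Z1_sg_set G d M act\<rparr>"

definition B1_sg :: "(nat \<Rightarrow> 'a monoid) \<Rightarrow> (nat \<Rightarrow> nat \<Rightarrow> 'a \<Rightarrow> 'a) \<Rightarrow> 'm monoid
    \<Rightarrow> ('a set \<Rightarrow> 'm \<Rightarrow> 'm) \<Rightarrow> ('a \<Rightarrow> 'm) monoid" where
  "B1_sg G d M act = (cochain_grp (carrier (G 0)) M)\<lparr>carrier := B1_sg_set G d M act\<rparr>"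

definition H1_sg :: "(nat \<Rightarrow> 'a monoid) \<Rightarrow> (nat \<Rightarrow> nat \<Rightarrow> 'a \<Rightarrow> 'a) \<Rightarrow> 'm monoid
    \<Rightarrow> ('a set \<Rightarrow> 'm \<Rightarrow> 'm) \<Rightarrow> ('a \<Rightarrow> 'm) set monoid" where
  "H1_sg G d M act = Z1_sg G d M act Mod B1_sg_set G d M act"

definition infl :: "(nat \<Rightarrow> 'a monoid) \<Rightarrow> (nat \<Rightarrow> nat \<Rightarrow> 'a \<Rightarrow> 'a) \<Rightarrow> ('a set \<Rightarrow> 'm) \<Rightarrow> ('a \<Rightarrow> 'm)" where
  "infl G d c = (\<lambda>g0\<in>carrier (G 0). c (cls G d g0))"

end

theory Submission
  imports Defs
begin

text \<open>
  Write pi : G_0 -> pi_0 G for the class map.  The comparison map c |-> c o pi is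
  the pullback of cochains along the surjection pi, and a cochain on G_0 lies in its image iff
  it is constant on the fibres of pi; on such cochains a two-sided inverse is obtained by
  evaluating at chosen representatives ("descending").  Both maps are multiplicative for the
  pointwise product, so pullback is an isomorphism onto its image, and descent induces an
  isomorphism of the quotients by corresponding subgroups (first two sections, no simplicial
  structure involved).
  The simplicial input is: B_0NG is normal, and two vertices have the same class iff they are
  the faces of one edge.  Hence every simplicial 1-cocycle is constant on fibres, and a cochain
  on pi_0 G is a cocycle iff its pullback is (degenerate edges realise all pairs of classes);
  coboundaries obviously correspond.  So pullback maps Z^1 and B^1 of pi_0 G onto those of G,
  and the theorem follows from the general isomorphism lemmas.
\<close>

section \<open>Pulling cochains back along a surjection\<close>

definition pullback :: "('x \<Rightarrow> 'y) \<Rightarrow> 'x set \<Rightarrow> ('y \<Rightarrow> 'm) \<Rightarrow> ('x \<Rightarrow> 'm)" where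
  "pullback \<pi> A c = (\<lambda>x\<in>A. c (\<pi> x))"

definition descend :: "('x \<Rightarrow> 'y) \<Rightarrow> 'x set \<Rightarrow> 'y set \<Rightarrow> ('x \<Rightarrow> 'm) \<Rightarrow> ('y \<Rightarrow> 'm)" where
  "descend \<pi> A B c' = (\<lambda>y\<in>B. c' (inv_into A \<pi> y))"

definition fibrewise :: "('x \<Rightarrow> 'y) \<Rightarrow> 'x set \<Rightarrow> ('x \<Rightarrow> 'm) set" where
  "fibrewise \<pi> A = {c'. c' \<in> extensional A \<and> (\<forall>a\<in>A. \<forall>b\<in>A. \<pi> a = \<pi> b \<longrightarrow> c' a = c' b)}"

lemma descend_pullback:
  assumes "\<pi> ` A = B" and "c \<in> extensional B"
  shows "descend \<pi> A B (pullback \<pi> A c) = c"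
proof
  fix y
  show "descend \<pi> A B (pullback \<pi> A c) y = c y"
  proof (cases "y \<in> B")
    case True
    then have "inv_into A \<pi> y \<in> A" "\<pi> (inv_into A \<pi> y) = y"
      using assms(1) by (auto intro: inv_into_into f_inv_into_f)
    then show ?thesis
      using True by (simp add: descend_def pullback_def)
  qed (use assms(2) in \<open>simp add: descend_def extensional_def\<close>)
qed

lemma pullback_descend:
  assumes "\<pi> ` A = B" and "c' \<in> fibrewise \<pi> A"
  shows "pullback \<pi> A (descend \<pi> A B c') = c'"
proof
  fix x
  show "pullback \<pi> A (descend \<pi> A B c') x = c' x"
  proof (cases "x \<in> A")
    case True
    then have x: "\<pi> x \<in> B" using assms(1) by blast
    have "inv_into A \<pi> (\<pi> x) \<in> A" "\<pi> (inv_into A \<pi> (\<pi> x)) = \<pi> x"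
      using True by (auto intro: inv_into_into f_inv_into_f)
    then have "c' (inv_into A \<pi> (\<pi> x)) = c' x"
      using True assms(2) unfolding fibrewise_def by blast
    then show ?thesis
      using True x by (simp add: pullback_def descend_def)
  next
    case False
    then show ?thesis
      using assms(2) by (simp add: pullback_def fibrewise_def extensional_def)
  qed
qed

lemma pullback_apply: "x \<in> A \<Longrightarrow> pullback \<pi> A c x = c (\<pi> x)"
  unfolding pullback_def by (rule restrict_apply')

lemma pullback_fibrewise: "pullback \<pi> A c \<in> fibrewise \<pi> A"
  by (simp add: pullback_def fibrewise_def)

lemma pullback_PiE:
  assumes "\<pi> ` A \<subseteq> B" and "c \<in> B \<rightarrow>\<^sub>E V"
  shows "pullback \<pi> A c \<in> A \<rightarrow>\<^sub>E V"
  unfolding pullback_def using assms by (intro restrict_PiE_iff[THEN iffD2]) blast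

lemma descend_PiE:
  assumes "\<pi> ` A = B" and "c' \<in> A \<rightarrow>\<^sub>E V"
  shows "descend \<pi> A B c' \<in> B \<rightarrow>\<^sub>E V"
  unfolding descend_def using assms by (intro restrict_PiE_iff[THEN iffD2]) (blast intro: inv_into_into)

lemma cochain_mult: "c \<otimes>\<^bsub>cochain_grp A M\<^esub> c' = (\<lambda>x\<in>A. c x \<otimes>\<^bsub>M\<^esub> c' x)"
  by (simp add: cochain_grp_def)

lemma pullback_mult:
  assumes "\<pi> ` A \<subseteq> B"
  shows "pullback \<pi> A (c \<otimes>\<^bsub>cochain_grp B M\<^esub> c')
     = pullback \<pi> A c \<otimes>\<^bsub>cochain_grp A M\<^esub> pullback \<pi> A c'"
  using assms by (intro ext) (simp add: pullback_def cochain_mult image_subset_iff)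

lemma descend_mult:
  assumes "\<pi> ` A = B"
  shows "descend \<pi> A B (c \<otimes>\<^bsub>cochain_grp A M\<^esub> c')
     = descend \<pi> A B c \<otimes>\<^bsub>cochain_grp B M\<^esub> descend \<pi> A B c'"
proof -
  have "\<forall>y\<in>B. inv_into A \<pi> y \<in> A"
    using assms by (blast intro: inv_into_into)
  then show ?thesis
    unfolding descend_def cochain_mult by (intro restrict_ext) simp
qed

lemma fibrewise_mult:
  assumes c: "c \<in> fibrewise \<pi> A" and c': "c' \<in> fibrewise \<pi> A"
  shows "c \<otimes>\<^bsub>cochain_grp A M\<^esub> c' \<in> fibrewise \<pi> A"
  unfolding fibrewise_def cochain_mult
proof (intro CollectI conjI restrict_extensional ballI impI)
  fix a b assume ab: "a \<in> A" "b \<in> A" "\<pi> a = \<pi> b"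
  then have "c a = c b" "c' a = c' b"
    using c c' unfolding fibrewise_def by blast+
  then show "(\<lambda>x\<in>A. c x \<otimes>\<^bsub>M\<^esub> c' x) a = (\<lambda>x\<in>A. c x \<otimes>\<^bsub>M\<^esub> c' x) b"
    using ab(1,2) by simp
qed

lemma descend_image:
  assumes "\<pi> ` A = B" and "S \<subseteq> extensional B"
  shows "descend \<pi> A B ` pullback \<pi> A ` S = S"
proof -
  have "descend \<pi> A B ` pullback \<pi> A ` S = (\<lambda>c. descend \<pi> A B (pullback \<pi> A c)) ` S"
    by (simp add: image_image)
  also have "\<dots> = (\<lambda>c. c) ` S"
    using assms by (intro image_cong) (auto simp: descend_pullback subset_iff)
  finally show ?thesis by simp
qed

lemma pullback_iso:
  assumes "\<pi> ` A = B" and "S \<subseteq> extensional B"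
  shows "pullback \<pi> A \<in> iso ((cochain_grp B M)\<lparr>carrier := S\<rparr>)
                             ((cochain_grp A M)\<lparr>carrier := pullback \<pi> A ` S\<rparr>)"
proof (rule isoI)
  show "pullback \<pi> A \<in> hom ((cochain_grp B M)\<lparr>carrier := S\<rparr>)
                            ((cochain_grp A M)\<lparr>carrier := pullback \<pi> A ` S\<rparr>)"
    using assms(1) pullback_mult[of \<pi> A B] by (intro homI) auto
  have "inj_on (pullback \<pi> A) S"
    using assms by (intro inj_on_inverseI[where g = "descend \<pi> A B"]) (auto simp: descend_pullback)
  then show "bij_betw (pullback \<pi> A) (carrier ((cochain_grp B M)\<lparr>carrier := S\<rparr>))
      (carrier ((cochain_grp A M)\<lparr>carrier := pullback \<pi> A ` S\<rparr>))"
    by (simp add: bij_betw_def)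
qed

section \<open>Quotients along a multiplicative bijection\<close>

lemma image_r_coset:
  assumes "\<And>x y. f (x \<otimes>\<^bsub>A\<^esub> y) = f x \<otimes>\<^bsub>A'\<^esub> f y"
  shows "f ` (H #>\<^bsub>A\<^esub> a) = f ` H #>\<^bsub>A'\<^esub> f a"
  unfolding r_coset_def by (simp add: image_UN assms)

lemma image_set_mult:
  assumes "\<And>x y. f (x \<otimes>\<^bsub>A\<^esub> y) = f x \<otimes>\<^bsub>A'\<^esub> f y"
  shows "f ` (U <#>\<^bsub>A\<^esub> V) = f ` U <#>\<^bsub>A'\<^esub> f ` V"
  unfolding set_mult_def by (simp add: image_UN assms)

text \<open>No group axioms are needed, which matters because the cochain structures here
  are not known to be groups.\<close>

lemma image_iso_FactGroup:
  assumes mult: "\<And>x y. f (x \<otimes>\<^bsub>A\<^esub> y) = f x \<otimes>\<^bsub>A'\<^esub> f y"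
    and inj: "inj_on f (\<Union> (rcosets\<^bsub>A\<^esub> H))"
    and carr: "f ` carrier A = carrier A'"
    and sub: "f ` H = H'"
  shows "(\<lambda>Y. f ` Y) \<in> iso (A Mod H) (A' Mod H')"
proof -
  have "(\<lambda>Y. f ` Y) ` (rcosets\<^bsub>A\<^esub> H) = (\<Union>a\<in>carrier A. {H' #>\<^bsub>A'\<^esub> f a})"
    unfolding RCOSETS_def image_UN by (simp add: image_r_coset[OF mult] sub)
  also have "\<dots> = rcosets\<^bsub>A'\<^esub> H'"
    unfolding RCOSETS_def carr[symmetric] by (simp add: image_UN)
  finally have rcosets: "(\<lambda>Y. f ` Y) ` (rcosets\<^bsub>A\<^esub> H) = rcosets\<^bsub>A'\<^esub> H'" .
  show ?thesis
  proof (rule isoI)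
    show "(\<lambda>Y. f ` Y) \<in> hom (A Mod H) (A' Mod H')"
      using rcosets by (intro homI) (auto simp: FactGroup_def image_set_mult[OF mult])
    show "bij_betw (\<lambda>Y. f ` Y) (carrier (A Mod H)) (carrier (A' Mod H'))"
      using inj_on_image[OF inj] rcosets by (simp add: FactGroup_def bij_betw_def)
  qed
qed

text \<open>Descent induces an isomorphism from the quotient of pulled-back cochains on A to the
  corresponding quotient on B: elements of cosets are fibrewise, where descent is injective.\<close>

lemma descend_iso_FactGroup:
  assumes surj: "\<pi> ` A = B" and S: "S \<subseteq> extensional B" and K: "K \<subseteq> extensional B"
  shows "(\<lambda>Y. descend \<pi> A B ` Y)
    \<in> iso ((cochain_grp A M)\<lparr>carrier := pullback \<pi> A ` S\<rparr> Mod pullback \<pi> A ` K)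
          ((cochain_grp B M)\<lparr>carrier := S\<rparr> Mod K)"
proof (rule image_iso_FactGroup)
  let ?T = "(cochain_grp A M)\<lparr>carrier := pullback \<pi> A ` S\<rparr>"
  have "\<Union> (rcosets\<^bsub>?T\<^esub> (pullback \<pi> A ` K)) \<subseteq> fibrewise \<pi> A"
    by (auto simp: RCOSETS_def r_coset_def intro!: fibrewise_mult pullback_fibrewise)
  moreover have "inj_on (descend \<pi> A B) (fibrewise \<pi> A)"
    using surj by (intro inj_on_inverseI[where g = "pullback \<pi> A"]) (rule pullback_descend)
  ultimately show "inj_on (descend \<pi> A B) (\<Union> (rcosets\<^bsub>?T\<^esub> (pullback \<pi> A ` K)))"
    by (rule inj_on_subset[rotated])
  show "descend \<pi> A B (x \<otimes>\<^bsub>?T\<^esub> y)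
      = descend \<pi> A B x \<otimes>\<^bsub>(cochain_grp B M)\<lparr>carrier := S\<rparr>\<^esub> descend \<pi> A B y" for x y
    using descend_mult[OF surj] by simp
  show "descend \<pi> A B ` carrier ?T = carrier ((cochain_grp B M)\<lparr>carrier := S\<rparr>)"
    using descend_image[OF surj S] by simp
  show "descend \<pi> A B ` pullback \<pi> A ` K = K"
    by (rule descend_image[OF surj K])
qed

section \<open>Simplicial groups in low degrees\<close>

locale simplicial_grp =
  fixes G :: "nat \<Rightarrow> 'a monoid" and d s :: "nat \<Rightarrow> nat \<Rightarrow> 'a \<Rightarrow> 'a"
  assumes simplicial: "simplicial_group G d s"
begin

text \<open>Keep the numeral 1 in G 1 and d 0 1 rather than rewriting it to Suc 0.\<close>
declare One_nat_def [simp del]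

lemma group_G: "group (G n)"
proof -
  have "\<forall>n. group (G n)"
    using simplicial unfolding simplicial_group_def by (elim conjE) assumption
  then show ?thesis ..
qed

lemma face_hom: "i \<le> 1 \<Longrightarrow> d 0 i \<in> hom (G 1) (G 0)"
proof -
  have "\<forall>n i. i \<le> Suc n \<longrightarrow> d n i \<in> hom (G (Suc n)) (G n)"
    using simplicial unfolding simplicial_group_def by (elim conjE) assumption
  then show "i \<le> 1 \<Longrightarrow> ?thesis" by (simp add: One_nat_def)
qed

lemma degeneracy_hom: "s 0 0 \<in> hom (G 0) (G 1)"
proof -
  have "\<forall>n j. j \<le> n \<longrightarrow> s n j \<in> hom (G n) (G (Suc n))"
    using simplicial unfolding simplicial_group_def by (elim conjE) assumption
  then show ?thesis by (simp add: One_nat_def)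
qed

lemma face_degeneracy:
  assumes "x \<in> carrier (G 0)"
  shows "d 0 0 (s 0 0 x) = x" and "d 0 1 (s 0 0 x) = x"
proof -
  have "\<forall>n j x. j \<le> n \<and> x \<in> carrier (G n) \<longrightarrow> d n j (s n j x) = x \<and> d n (Suc j) (s n j x) = x"
    using simplicial unfolding simplicial_group_def by (elim conjE) assumption
  then show "d 0 0 (s 0 0 x) = x" "d 0 1 (s 0 0 x) = x"
    using assms by (simp_all add: One_nat_def)
qed

sublocale G0: group "G 0" by (rule group_G)
sublocale G1: group "G 1" by (rule group_G)
sublocale d0: group_hom "G 1" "G 0" "d 0 0"
  by (simp add: group_hom_def group_hom_axioms_def group_G face_hom)
sublocale d1: group_hom "G 1" "G 0" "d 0 1"
  by (simp add: group_hom_def group_hom_axioms_def group_G face_hom)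
sublocale s0: group_hom "G 0" "G 1" "s 0 0"
  by (simp add: group_hom_def group_hom_axioms_def group_G degeneracy_hom)

text \<open>B_0NG = d0(ker d1) is a normal subgroup of G_0: it is the image of a subgroup, and
  conjugation by g in G_0 is realised on ker d1 by conjugation with the degenerate edge s0 g.\<close>

lemma B0N_normal: "B0N G d \<lhd> G 0"
proof -
  have N1: "N1 G d = kernel (G 1) (G 0) (d 0 1)"
    by (simp add: N1_def kernel_def)
  have "subgroup (N1 G d) (G 1)"
    unfolding N1 by (rule d1.subgroup_kernel)
  then have sub: "subgroup (B0N G d) (G 0)"
    unfolding B0N_def by (rule d0.subgroup_img_is_subgroup)
  show ?thesis unfolding G0.normal_inv_iff
  proof (intro conjI sub ballI)
    fix g a assume g: "g \<in> carrier (G 0)" and "a \<in> B0N G d"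
    then obtain x where x: "x \<in> carrier (G 1)" "d 0 1 x = \<one>\<^bsub>G 0\<^esub>" "a = d 0 0 x"
      unfolding B0N_def N1_def by auto
    let ?y = "s 0 0 g \<otimes>\<^bsub>G 1\<^esub> x \<otimes>\<^bsub>G 1\<^esub> inv\<^bsub>G 1\<^esub> s 0 0 g"
    have "?y \<in> N1 G d" unfolding N1_def using g x face_degeneracy[OF g] by simp
    moreover have "d 0 0 ?y = g \<otimes>\<^bsub>G 0\<^esub> a \<otimes>\<^bsub>G 0\<^esub> inv\<^bsub>G 0\<^esub> g"
      using g x face_degeneracy[OF g] by simp
    ultimately show "g \<otimes>\<^bsub>G 0\<^esub> a \<otimes>\<^bsub>G 0\<^esub> inv\<^bsub>G 0\<^esub> g \<in> B0N G d"
      unfolding B0N_def by (metis image_eqI)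
  qed
qed

sublocale B: normal "B0N G d" "G 0" by (rule B0N_normal)

lemma cls_hom: "cls G d \<in> hom (G 0) (pi0 G d)"
  using B.r_coset_hom_Mod unfolding cls_def[abs_def] pi0_def .

lemma cls_surj: "cls G d ` carrier (G 0) = carrier (pi0 G d)"
  unfolding cls_def pi0_def FactGroup_def RCOSETS_def by auto

lemma cls_closed: "g \<in> carrier (G 0) \<Longrightarrow> cls G d g \<in> carrier (pi0 G d)"
  using cls_surj by blast

lemma cls_mult:
  "x \<in> carrier (G 0) \<Longrightarrow> y \<in> carrier (G 0) \<Longrightarrow>
     cls G d (x \<otimes>\<^bsub>G 0\<^esub> y) = cls G d x \<otimes>\<^bsub>pi0 G d\<^esub> cls G d y"
  using cls_hom by (rule hom_mult)

lemma cls_one: "cls G d \<one>\<^bsub>G 0\<^esub> = \<one>\<^bsub>pi0 G d\<^esub>"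
  unfolding cls_def pi0_def FactGroup_def by (simp add: B.subset)

lemma same_class_iff:
  assumes a: "a \<in> carrier (G 0)" and b: "b \<in> carrier (G 0)"
  shows "cls G d a = cls G d b \<longleftrightarrow> a \<otimes>\<^bsub>G 0\<^esub> inv\<^bsub>G 0\<^esub> b \<in> B0N G d"
proof
  assume "cls G d a = cls G d b"
  moreover have "a \<in> B0N G d #>\<^bsub>G 0\<^esub> a"
    by (rule G0.rcos_self[OF a B.subgroup_axioms])
  ultimately have "a \<in> B0N G d #>\<^bsub>G 0\<^esub> b"
    unfolding cls_def by simp
  then show "a \<otimes>\<^bsub>G 0\<^esub> inv\<^bsub>G 0\<^esub> b \<in> B0N G d"
    using B.rcos_module_imp[OF G0.is_group b] by blast
next
  assume "a \<otimes>\<^bsub>G 0\<^esub> inv\<^bsub>G 0\<^esub> b \<in> B0N G d"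
  then have "a \<in> B0N G d #>\<^bsub>G 0\<^esub> b"
    using B.rcos_module_rev[OF G0.is_group b a] by blast
  then have "B0N G d #>\<^bsub>G 0\<^esub> b = B0N G d #>\<^bsub>G 0\<^esub> a"
    by (rule G0.repr_independence[OF _ b B.subgroup_axioms])
  then show "cls G d a = cls G d b"
    unfolding cls_def by (rule sym)
qed

text \<open>An element a b^-1 lies in B_0NG exactly when a and b are the two faces of one edge:
  translate an edge in ker d1 by the degenerate edge s0 b, and conversely.\<close>

lemma B0N_iff_edge:
  assumes a: "a \<in> carrier (G 0)" and b: "b \<in> carrier (G 0)"
  shows "a \<otimes>\<^bsub>G 0\<^esub> inv\<^bsub>G 0\<^esub> b \<in> B0N G d \<longleftrightarrow> (\<exists>g\<in>carrier (G 1). d 0 0 g = a \<and> d 0 1 g = b)"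
proof
  assume "a \<otimes>\<^bsub>G 0\<^esub> inv\<^bsub>G 0\<^esub> b \<in> B0N G d"
  then obtain x where x0: "a \<otimes>\<^bsub>G 0\<^esub> inv\<^bsub>G 0\<^esub> b = d 0 0 x" and "x \<in> N1 G d"
    unfolding B0N_def by (rule imageE)
  then have x: "x \<in> carrier (G 1)" and x1: "d 0 1 x = \<one>\<^bsub>G 0\<^esub>"
    unfolding N1_def by simp_all
  let ?g = "x \<otimes>\<^bsub>G 1\<^esub> s 0 0 b"
  have "d 0 0 ?g = a \<otimes>\<^bsub>G 0\<^esub> inv\<^bsub>G 0\<^esub> b \<otimes>\<^bsub>G 0\<^esub> b"
    using x x0[symmetric] b face_degeneracy(1)[OF b] by simp
  also have "\<dots> = a"
    using a b by (simp add: G0.m_assoc)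
  finally have "d 0 0 ?g = a" .
  moreover have "?g \<in> carrier (G 1)"
    using x b by simp
  moreover have "d 0 1 ?g = b"
    using x x1 b face_degeneracy(2)[OF b] by simp
  ultimately show "\<exists>g\<in>carrier (G 1). d 0 0 g = a \<and> d 0 1 g = b"
    by blast
next
  assume "\<exists>g\<in>carrier (G 1). d 0 0 g = a \<and> d 0 1 g = b"
  then obtain g where g: "g \<in> carrier (G 1)" "d 0 0 g = a" "d 0 1 g = b" by blast
  let ?x = "g \<otimes>\<^bsub>G 1\<^esub> inv\<^bsub>G 1\<^esub> s 0 0 b"
  have "?x \<in> carrier (G 1)"
    using g b by simp
  moreover have "d 0 1 ?x = \<one>\<^bsub>G 0\<^esub>"
    using g b face_degeneracy(2)[OF b] by (simp add: G0.r_inv)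
  ultimately have "?x \<in> N1 G d"
    unfolding N1_def by simp
  moreover have "d 0 0 ?x = a \<otimes>\<^bsub>G 0\<^esub> inv\<^bsub>G 0\<^esub> b"
    using g b face_degeneracy(1)[OF b] by simp
  ultimately show "a \<otimes>\<^bsub>G 0\<^esub> inv\<^bsub>G 0\<^esub> b \<in> B0N G d"
    unfolding B0N_def by (metis image_eqI)
qed

lemma same_class_iff_edge:
  assumes "a \<in> carrier (G 0)" and "b \<in> carrier (G 0)"
  shows "cls G d a = cls G d b \<longleftrightarrow> (\<exists>g\<in>carrier (G 1). d 0 0 g = a \<and> d 0 1 g = b)"
  using same_class_iff[OF assms] B0N_iff_edge[OF assms] by (rule trans)

end

section \<open>Degree-one cocycles of a simplicial group\<close>

locale simplicial_grp_module = simplicial_grp +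
  fixes M :: "'m monoid" and act :: "'a set \<Rightarrow> 'm \<Rightarrow> 'm"
  assumes module: "is_module (pi0 G d) M act"
begin

sublocale M: comm_group M
  using module unfolding is_module_def by blast

text \<open>The module axioms enter only through these two unit laws.\<close>

lemma act_on_one: "C \<in> carrier (pi0 G d) \<Longrightarrow> act C \<one>\<^bsub>M\<^esub> = \<one>\<^bsub>M\<^esub>"
  using module M.is_group unfolding is_module_def
  by (simp add: group_hom.hom_one group_hom_axioms_def group_hom_def)

lemma act_by_one: "m \<in> carrier M \<Longrightarrow> act \<one>\<^bsub>pi0 G d\<^esub> m = m"
  using module unfolding is_module_def by blast

lemma Z1_sg_identity:
  assumes "c \<in> Z1_sg_set G d M act" and "g \<in> carrier (G 1)" and "x \<in> carrier (G 0)"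
  shows "c (d 0 0 g) \<otimes>\<^bsub>M\<^esub> inv\<^bsub>M\<^esub> (c (d 0 1 g \<otimes>\<^bsub>G 0\<^esub> x))
      \<otimes>\<^bsub>M\<^esub> act (cls G d (d 0 1 g)) (c x) = \<one>\<^bsub>M\<^esub>"
  using assms unfolding Z1_sg_set_def by blast

lemma Z1_sg_PiE: "c \<in> Z1_sg_set G d M act \<Longrightarrow> c \<in> carrier (G 0) \<rightarrow>\<^sub>E carrier M"
  unfolding Z1_sg_set_def by blast

text \<open>Evaluating the cocycle identity on the unit edge shows that a cocycle is normalised.\<close>

lemma cocycle_at_one:
  assumes c: "c \<in> Z1_sg_set G d M act"
  shows "c \<one>\<^bsub>G 0\<^esub> = \<one>\<^bsub>M\<^esub>"
proof -
  have cM: "c \<one>\<^bsub>G 0\<^esub> \<in> carrier M"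
    using Z1_sg_PiE[OF c] by blast
  have "c \<one>\<^bsub>G 0\<^esub> \<otimes>\<^bsub>M\<^esub> inv\<^bsub>M\<^esub> (c \<one>\<^bsub>G 0\<^esub>) \<otimes>\<^bsub>M\<^esub> c \<one>\<^bsub>G 0\<^esub> = \<one>\<^bsub>M\<^esub>"
    using Z1_sg_identity[OF c G1.one_closed G0.one_closed] act_by_one[OF cM] by (simp add: cls_one)
  then show ?thesis
    using cM by (simp add: M.r_inv)
qed

text \<open>A simplicial cocycle takes the same value at both ends of every edge, hence is constant
  on the classes of pi_0 G.  This is the key point: such cochains descend to pi_0 G.\<close>

lemma cocycle_fibrewise:
  assumes c: "c \<in> Z1_sg_set G d M act"
  shows "c \<in> fibrewise (cls G d) (carrier (G 0))"
  unfolding fibrewise_def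
proof (intro CollectI conjI ballI impI)
  show "c \<in> extensional (carrier (G 0))"
    using Z1_sg_PiE[OF c] by (simp add: PiE_def)
  fix a b assume a: "a \<in> carrier (G 0)" and b: "b \<in> carrier (G 0)" and "cls G d a = cls G d b"
  then obtain g where g: "g \<in> carrier (G 1)" "d 0 0 g = a" "d 0 1 g = b"
    using same_class_iff_edge by blast
  have ab: "c a \<in> carrier M" "c b \<in> carrier M"
    using Z1_sg_PiE[OF c] a b by auto
  have "c a \<otimes>\<^bsub>M\<^esub> inv\<^bsub>M\<^esub> (c b) \<otimes>\<^bsub>M\<^esub> act (cls G d b) \<one>\<^bsub>M\<^esub> = \<one>\<^bsub>M\<^esub>"
    using Z1_sg_identity[OF c g(1) G0.one_closed] g b by (simp add: cocycle_at_one[OF c])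
  then have "c a \<otimes>\<^bsub>M\<^esub> inv\<^bsub>M\<^esub> (c b) = \<one>\<^bsub>M\<^esub>"
    using ab by (simp add: act_on_one[OF cls_closed[OF b]])
  then show "c a = c b"
    using ab M.inv_solve_right'[of "\<one>\<^bsub>M\<^esub>" "c a" "c b"] by simp
qed

lemma infl_eq_pullback: "infl G d = pullback (cls G d) (carrier (G 0))"
  by (rule ext) (simp add: infl_def pullback_def)

text \<open>Pullbacks of cocycles on pi_0 G are cocycles: the two faces of an edge have the same
  class, so the simplicial identity is the group identity at the classes of d1 g and x.\<close>

lemma pullback_cocycle:
  assumes c: "c \<in> Z1_grp_set (pi0 G d) M act"
  shows "pullback (cls G d) (carrier (G 0)) c \<in> Z1_sg_set G d M act"
    (is "?c' \<in> _")
proof -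
  have "?c' \<in> carrier (G 0) \<rightarrow>\<^sub>E carrier M"
    using c cls_surj unfolding Z1_grp_set_def by (intro pullback_PiE) auto
  moreover have "?c' (d 0 0 g) \<otimes>\<^bsub>M\<^esub> inv\<^bsub>M\<^esub> (?c' (d 0 1 g \<otimes>\<^bsub>G 0\<^esub> x))
      \<otimes>\<^bsub>M\<^esub> act (cls G d (d 0 1 g)) (?c' x) = \<one>\<^bsub>M\<^esub>"
    if g: "g \<in> carrier (G 1)" and x: "x \<in> carrier (G 0)" for g x
  proof -
    have g0: "d 0 0 g \<in> carrier (G 0)" and g1: "d 0 1 g \<in> carrier (G 0)"
      using g by simp_all
    have edge: "cls G d (d 0 0 g) = cls G d (d 0 1 g)"
      using same_class_iff_edge[OF g0 g1] g by blast
    have "c (cls G d (d 0 1 g)) \<otimes>\<^bsub>M\<^esub>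
        inv\<^bsub>M\<^esub> (c (cls G d (d 0 1 g) \<otimes>\<^bsub>pi0 G d\<^esub> cls G d x))
        \<otimes>\<^bsub>M\<^esub> act (cls G d (d 0 1 g)) (c (cls G d x)) = \<one>\<^bsub>M\<^esub>"
      using c cls_closed[OF g1] cls_closed[OF x] unfolding Z1_grp_set_def by blast
    then show ?thesis
      unfolding pullback_apply[OF g0] pullback_apply[OF G0.m_closed[OF g1 x]]
        pullback_apply[OF x] edge cls_mult[OF g1 x] .
  qed
  ultimately show ?thesis
    unfolding Z1_sg_set_def by blast
qed

text \<open>Conversely, a cochain on pi_0 G whose pullback is a cocycle is a cocycle: the
  degenerate edge s0 a has both faces a, so the simplicial identity at (s0 a, b) is the
  group identity at the classes of a and b, and these range over all of pi_0 G.\<close>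

lemma cocycle_of_pullback:
  assumes c: "c \<in> carrier (pi0 G d) \<rightarrow>\<^sub>E carrier M"
    and c': "pullback (cls G d) (carrier (G 0)) c \<in> Z1_sg_set G d M act"
  shows "c \<in> Z1_grp_set (pi0 G d) M act"
proof -
  let ?c' = "pullback (cls G d) (carrier (G 0)) c"
  have "c h \<otimes>\<^bsub>M\<^esub> inv\<^bsub>M\<^esub> (c (h \<otimes>\<^bsub>pi0 G d\<^esub> k)) \<otimes>\<^bsub>M\<^esub> act h (c k) = \<one>\<^bsub>M\<^esub>"
    if h: "h \<in> carrier (pi0 G d)" and k: "k \<in> carrier (pi0 G d)" for h k
  proof -
    obtain a where a: "h = cls G d a" "a \<in> carrier (G 0)"
      using h unfolding cls_surj[symmetric] by (rule imageE)
    obtain b where b: "k = cls G d b" "b \<in> carrier (G 0)"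
      using k unfolding cls_surj[symmetric] by (rule imageE)
    have "?c' a \<otimes>\<^bsub>M\<^esub> inv\<^bsub>M\<^esub> (?c' (a \<otimes>\<^bsub>G 0\<^esub> b)) \<otimes>\<^bsub>M\<^esub> act (cls G d a) (?c' b) = \<one>\<^bsub>M\<^esub>"
      using Z1_sg_identity[OF c' s0.hom_closed[OF a(2)] b(2)]
      unfolding face_degeneracy[OF a(2)] .
    then show ?thesis
      unfolding a(1) b(1) cls_mult[OF a(2) b(2), symmetric] pullback_apply[OF a(2)]
        pullback_apply[OF b(2)] pullback_apply[OF G0.m_closed[OF a(2) b(2)]] .
  qed
  then show ?thesis
    using c unfolding Z1_grp_set_def by blast
qed

text \<open>Every simplicial cocycle is fibrewise, so it descends to a cochain on pi_0 G, which
  is a cocycle by the previous lemma: the cocycles of G are exactly the pullbacks.\<close>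

lemma Z1_pullback: "pullback (cls G d) (carrier (G 0)) ` Z1_grp_set (pi0 G d) M act = Z1_sg_set G d M act"
proof
  show "pullback (cls G d) (carrier (G 0)) ` Z1_grp_set (pi0 G d) M act \<subseteq> Z1_sg_set G d M act"
    using pullback_cocycle by blast
  show "Z1_sg_set G d M act \<subseteq> pullback (cls G d) (carrier (G 0)) ` Z1_grp_set (pi0 G d) M act"
  proof
    fix c' assume c': "c' \<in> Z1_sg_set G d M act"
    let ?c = "descend (cls G d) (carrier (G 0)) (carrier (pi0 G d)) c'"
    have c'_eq: "pullback (cls G d) (carrier (G 0)) ?c = c'"
      by (rule pullback_descend[OF cls_surj cocycle_fibrewise[OF c']])
    have "?c \<in> Z1_grp_set (pi0 G d) M act"
    proof (rule cocycle_of_pullback)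
      show "?c \<in> carrier (pi0 G d) \<rightarrow>\<^sub>E carrier M"
        by (rule descend_PiE[OF cls_surj Z1_sg_PiE[OF c']])
      show "pullback (cls G d) (carrier (G 0)) ?c \<in> Z1_sg_set G d M act"
        unfolding c'_eq by (rule c')
    qed
    then show "c' \<in> pullback (cls G d) (carrier (G 0)) ` Z1_grp_set (pi0 G d) M act"
      using c'_eq by (metis image_eqI)
  qed
qed

lemma B1_pullback: "pullback (cls G d) (carrier (G 0)) ` B1_grp_set (pi0 G d) M act = B1_sg_set G d M act"
proof -
  have grp: "B1_grp_set (pi0 G d) M act
      = (\<lambda>m. \<lambda>h\<in>carrier (pi0 G d). m \<otimes>\<^bsub>M\<^esub> inv\<^bsub>M\<^esub> (act h m)) ` carrier M"
    unfolding B1_grp_set_def by blast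
  have sg: "B1_sg_set G d M act
      = (\<lambda>m. \<lambda>x\<in>carrier (G 0). m \<otimes>\<^bsub>M\<^esub> inv\<^bsub>M\<^esub> (act (cls G d x) m)) ` carrier M"
    unfolding B1_sg_set_def by blast
  have "pullback (cls G d) (carrier (G 0)) (\<lambda>h\<in>carrier (pi0 G d). m \<otimes>\<^bsub>M\<^esub> inv\<^bsub>M\<^esub> (act h m))
      = (\<lambda>x\<in>carrier (G 0). m \<otimes>\<^bsub>M\<^esub> inv\<^bsub>M\<^esub> (act (cls G d x) m))" for m
    unfolding pullback_def by (intro restrict_ext) (simp add: cls_closed)
  then show ?thesis
    unfolding grp sg image_image by simp
qed

end

lemma Z1_grp_set_extensional: "Z1_grp_set P M act \<subseteq> extensional (carrier P)"
  unfolding Z1_grp_set_def PiE_def by blast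

lemma B1_grp_set_extensional: "B1_grp_set P M act \<subseteq> extensional (carrier P)"
  unfolding B1_grp_set_def by auto

theorem proposition3p5:
  fixes G :: "nat \<Rightarrow> 'a monoid" and d s :: "nat \<Rightarrow> nat \<Rightarrow> 'a \<Rightarrow> 'a"
    and M :: "'m monoid" and act :: "'a set \<Rightarrow> 'm \<Rightarrow> 'm"
  assumes "simplicial_group G d s"
    and "is_module (pi0 G d) M act"
  shows "infl G d \<in> iso (Z1_grp (pi0 G d) M act) (Z1_sg G d M act)
     \<and> infl G d \<in> iso (B1_grp (pi0 G d) M act) (B1_sg G d M act)
     \<and> H1_sg G d M act \<cong> H1_grp (pi0 G d) M act"
proof -
  interpret simplicial_grp_module G d s M act
    using assms by (simp add: simplicial_grp_module_def simplicial_grp_def simplicial_grp_module_axioms_def)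
  note Z1 = Z1_sg_def Z1_grp_def Z1_pullback[symmetric]
  note B1 = B1_sg_def B1_grp_def B1_pullback[symmetric]
  have "infl G d \<in> iso (Z1_grp (pi0 G d) M act) (Z1_sg G d M act)"
    unfolding Z1 infl_eq_pullback by (rule pullback_iso[OF cls_surj Z1_grp_set_extensional])
  moreover have "infl G d \<in> iso (B1_grp (pi0 G d) M act) (B1_sg G d M act)"
    unfolding B1 infl_eq_pullback by (rule pullback_iso[OF cls_surj B1_grp_set_extensional])
  moreover have "H1_sg G d M act \<cong> H1_grp (pi0 G d) M act"
    unfolding H1_sg_def H1_grp_def Z1 B1_pullback[symmetric]
    by (rule is_isoI[OF descend_iso_FactGroup[OF cls_surj Z1_grp_set_extensional B1_grp_set_extensional]])
  ultimately show ?thesis by blast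
qed

end
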